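(* Let $q$ be a power of an odd prime, $d\ge 2$, $r\in\mathbb F_q^*$. Define on $\mathbb F_q^{2d}$ the varieties $V_{\mathcal Q_r}=\{(x,x')\in\mathbb F_q^{2d}: \|x\|_Q-r\|x'\|_Q=0\}$ and $V_{\mathcal Q_r^*}=\{(m,m')\in\mathbb F_q^{2d}: \|m\|_{Q^*}-r^{-1}\|m'\|_{Q^*}=0\}$. Then for every $M\in\mathbb F_q^{2d}$: (i) if $d$ is even, $\widehat{V_{\mathcal Q_r}}(M)=\frac{\delta_0(M)}{q}+\frac{V_{\mathcal Q_r^*}(M)}{q^d}-\frac{1}{q^{d+1}}$; (ii) if $d$ is odd, $\widehat{V_{\mathcal Q_r}}(M)=\frac{\delta_0(M)}{q}+\frac{\eta(r)V_{\mathcal Q_r^*}(M)}{q^d}-\frac{\eta(r)}{q^{d+1}}$.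
   Context: $\eta$ is the quadratic character of $\mathbb F_q^*$ ($\eta(t)=1$ if $t$ is a nonzero square, $-1$ otherwise). Fix a symmetric $d\times d$ matrix $A$ over $\mathbb F_q$ with $\det A\ne0$. If $d$ is even: $\|x\|_Q=x_1^2-x_2^2+\dots+x_{d-1}^2-\varepsilon x_d^2$ and $\|m\|_{Q^*}=m_1^2-m_2^2+\dots+m_{d-1}^2-\varepsilon^{-1}m_d^2$, with $\varepsilon\in\mathbb F_q^*$ such that $\eta((-1)^{d/2}\varepsilon)=\eta(\det A)$. If $d$ is odd: $\|x\|_Q=x_1^2-x_2^2+\dots+x_{d-2}^2-x_{d-1}^2+\varepsilon x_d^2$ and $\|m\|_{Q^*}=m_1^2-m_2^2+\dots+m_{d-2}^2-m_{d-1}^2+\varepsilon^{-1}m_d^2$, with $\eta((-1)^{(d-1)/2}\varepsilon)=\eta(\det A)$. $\chi$ is the canonical additive character of $\mathbb F_q$ ($\chi(c)=e^{2\pi i\,\mathrm{Tr}(c)/p}$), the Fourier transform on $\mathbb F_q^{n}$ is $\widehat f(M)=q^{-n}\sum_X\chi(-M\cdot X)f(X)$, sets are identified with their indicator functions, and $\delta_0$ is the indicator of the origin. *)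

theory Defs
  imports Complex_Main "HOL-Library.Cardinality" "Jordan_Normal_Form.Determinant"
begin

definition fq_deg :: "'a::{finite,field} itself \<Rightarrow> nat" where
  "fq_deg (t :: 'a itself) = (LEAST n. CARD('a) = CHAR('a) ^ n)"

definition fq_trace :: "'a::{finite,field} \<Rightarrow> 'a" where
  "fq_trace c = (\<Sum>j<fq_deg TYPE('a). c ^ (CHAR('a) ^ j))"

(* the trace value, lying in the prime field, as an integer in {0..p-1} *)
definition fq_trace_nat :: "'a::{finite,field} \<Rightarrow> nat" where
  "fq_trace_nat c = (THE k. k < CHAR('a) \<and> of_nat k = fq_trace c)"

definition can_chi :: "'a::{finite,field} \<Rightarrow> complex" where
  "can_chi c = cis (2 * pi * real (fq_trace_nat c) / real CHAR('a))"

(* quadratic character (eta 0 = 0; only used on nonzero arguments) *)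
definition qchar :: "'a::{finite,field} \<Rightarrow> int" where
  "qchar t = (if t = 0 then 0 else if (\<exists>y. y ^ 2 = t) then 1 else -1)"

(* F_q^n, as functions nat \<Rightarrow> 'a vanishing outside {0..<n} *)
definition fvecs :: "nat \<Rightarrow> (nat \<Rightarrow> 'a::{finite,field}) set" where
  "fvecs n = {x. \<forall>i\<ge>n. x i = 0}"

definition fdot :: "nat \<Rightarrow> (nat \<Rightarrow> 'a::{finite,field}) \<Rightarrow> (nat \<Rightarrow> 'a) \<Rightarrow> 'a" where
  "fdot n m x = (\<Sum>i<n. m i * x i)"

definition ffourier :: "nat \<Rightarrow> ((nat \<Rightarrow> 'a::{finite,field}) \<Rightarrow> complex) \<Rightarrow> (nat \<Rightarrow> 'a) \<Rightarrow> complex" where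
  "ffourier n f M = (1 / of_nat CARD('a) ^ n) *
     (\<Sum>X\<in>fvecs n. can_chi (- fdot n M X) * f X)"

(* the form ||x||_Q on F_q^d (0-indexed coordinates x 0, ..., x (d-1)):
   d even: x_1^2 - x_2^2 + ... + x_{d-1}^2 - e x_d^2
   d odd : x_1^2 - x_2^2 + ... + x_{d-2}^2 - x_{d-1}^2 + e x_d^2
   The dual form ||m||_{Q*} is qform d (inverse e) m. *)
definition qform :: "nat \<Rightarrow> 'a::{finite,field} \<Rightarrow> (nat \<Rightarrow> 'a) \<Rightarrow> 'a" where
  "qform d e x = (\<Sum>i<d - 1. (-1) ^ i * x i ^ 2)
                 + (if even d then - e else e) * x (d - 1) ^ 2"

(* a point X of F_q^(2d) is X = (x, x') with x i = X i, x' i = X (d + i) for i < d *)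
definition fst_half :: "nat \<Rightarrow> (nat \<Rightarrow> 'a::zero) \<Rightarrow> (nat \<Rightarrow> 'a)" where
  "fst_half d X = (\<lambda>i. if i < d then X i else 0)"
definition snd_half :: "nat \<Rightarrow> (nat \<Rightarrow> 'a::zero) \<Rightarrow> (nat \<Rightarrow> 'a)" where
  "snd_half d X = (\<lambda>i. if i < d then X (d + i) else 0)"

definition VQ :: "nat \<Rightarrow> 'a::{finite,field} \<Rightarrow> 'a \<Rightarrow> (nat \<Rightarrow> 'a) set" where
  "VQ d e r = {X \<in> fvecs (2 * d).
      qform d e (fst_half d X) - r * qform d e (snd_half d X) = 0}"

definition VQdual :: "nat \<Rightarrow> 'a::{finite,field} \<Rightarrow> 'a \<Rightarrow> (nat \<Rightarrow> 'a) set" where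
  "VQdual d e r = {M \<in> fvecs (2 * d).
      qform d (inverse e) (fst_half d M) - inverse r * qform d (inverse e) (snd_half d M) = 0}"

definition ind :: "'b set \<Rightarrow> 'b \<Rightarrow> complex" where
  "ind S x = (if x \<in> S then 1 else 0)"

end

(*
  The indicator of a diagonal quadric Q(X) = sum_i c_i X_i^2 = 0 is q^-1 sum_s chi(s Q(X)), so
  its Fourier transform factors over the coordinates into
  q^(-2d-1) sum_s prod_i sum_x chi(s c_i x^2 - m_i x).
  The term s = 0 is q^(2d) delta_0(M). For s <> 0, completing the square turns the i-th factor
  into chi(-m_i^2 / (4 s c_i)) times the Gauss sum eta(s c_i) G, where G^2 = eta(-1) q. As there
  are 2d factors, eta(s) cancels and the product is
  eta((-1)^d prod_i c_i) q^d chi(-Q*(M) / (4 s)),  Q*(M) = sum_i m_i^2 / c_i,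
  and summing over s <> 0 gives q [Q*(M) = 0] - 1. For V_{Q_r} the coefficients are those of
  ||.||_Q followed by -r times them, so Q* is the form defining V_{Q_r*} and the sign is eta(r)^d.
*)

theory Submission
  imports
    Defs
    "HOL-Computational_Algebra.Polynomial"
    "HOL-Computational_Algebra.Primes"
    "HOL-Number_Theory.Cong"
    "HOL-Library.FuncSet"
    "HOL-Library.Real_Mod"
begin

section \<open>Finite fields\<close>

lemma prime_CHAR_finite_field: "prime CHAR('a::{finite,field})"
  by (simp add: finite_imp_CHAR_pos prime_CHAR_semidom)

lemma of_nat_mod_CHAR: "(of_nat (n mod CHAR('a)) :: 'a::semiring_1_cancel) = of_nat n"
  by (simp add: of_nat_eq_iff_cong_CHAR cong_def)

lemma finite_field_power_card_eq_self:
  fixes x :: "'a::{finite,field}"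
  shows "x ^ CARD('a) = x"
proof (cases "x = 0")
  case False
  have "x ^ (CARD('a) - 1) * (\<Prod>y\<in>UNIV - {0}. y) = (\<Prod>y\<in>UNIV - {0}. x * y)"
    by (simp add: prod.distrib card_Diff_singleton)
  also have "\<dots> = (\<Prod>y\<in>UNIV - {0}. y)"
    by (rule prod.reindex_bij_witness[of _ "\<lambda>y. y / x" "\<lambda>y. x * y"]) (use False in auto)
  finally have "x ^ (CARD('a) - 1) = 1"
    by simp
  moreover have "CARD('a) = Suc (CARD('a) - 1)"
    using finite_UNIV_card_ge_0[where 'a='a] by simp
  ultimately show ?thesis
    by (metis power_Suc2 mult_1)
qed (use finite_UNIV_card_ge_0[where 'a='a] in \<open>simp add: power_0_left\<close>)

definition add_closed :: "'a::monoid_add set \<Rightarrow> bool" where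
  "add_closed W \<longleftrightarrow> 0 \<in> W \<and> (\<forall>x\<in>W. \<forall>y\<in>W. x + y \<in> W)"

lemma add_closed_of_nat_mult:
  assumes "add_closed (W :: 'a::semiring_1 set)" and "x \<in> W"
  shows "of_nat k * x \<in> W"
  using assms by (induction k) (auto simp: add_closed_def algebra_simps)

lemma add_closed_cancel_of_nat:
  fixes W :: "'a::{finite,field} set"
  assumes W: "add_closed W" and kv: "of_nat k * v \<in> W" and k: "\<not> CHAR('a) dvd k"
  shows "v \<in> W"
proof -
  have "coprime k CHAR('a)"
    using prime_imp_coprime[OF prime_CHAR_finite_field k] by (simp add: coprime_commute)
  then obtain a where "[k * a = Suc 0] (mod CHAR('a))"
    using cong_solve_coprime_nat by blast
  then have "(of_nat (k * a) :: 'a) = of_nat (Suc 0)"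
    by (simp only: of_nat_eq_iff_cong_CHAR)
  then have "of_nat a * of_nat k = (1::'a)"
    by (simp add: mult.commute)
  have "of_nat a * (of_nat k * v) \<in> W"
    by (rule add_closed_of_nat_mult[OF W kv])
  also have "of_nat a * (of_nat k * v) = v"
    using \<open>of_nat a * of_nat k = 1\<close> by (simp add: mult.assoc[symmetric])
  finally show ?thesis .
qed

lemma add_closed_uminus:
  fixes W :: "'a::{finite,field} set"
  assumes "add_closed W" and "w \<in> W"
  shows "- w \<in> W"
proof -
  have "- w = of_nat (CHAR('a) - 1) * w"
    using prime_gt_0_nat[OF prime_CHAR_finite_field[where 'a='a]] by simp
  then show ?thesis
    using add_closed_of_nat_mult[OF assms] by simp
qed

lemma inj_on_add_closed_extend:
  fixes W :: "'a::{finite,field} set"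
  assumes W: "add_closed W" and v: "v \<notin> W"
  shows "inj_on (\<lambda>(w, j). w + of_nat j * v) (W \<times> {..<CHAR('a)})"
proof -
  let ?p = "CHAR('a)"
  have no_collision: "w + of_nat j * v \<noteq> w' + of_nat j' * v"
    if "w \<in> W" "w' \<in> W" "j' < j" "j < ?p" for w w' j j'
  proof
    assume "w + of_nat j * v = w' + of_nat j' * v"
    then have "of_nat (j - j') * v = w' + - w"
      using \<open>j' < j\<close> by (simp add: algebra_simps)
    also have "\<dots> \<in> W"
      using W add_closed_uminus[OF W] that unfolding add_closed_def by blast
    finally have "of_nat (j - j') * v \<in> W" .
    moreover have "\<not> ?p dvd j - j'"
      using that by (auto dest: dvd_imp_le)
    ultimately have "v \<in> W"
      by (rule add_closed_cancel_of_nat[OF W])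
    with v show False ..
  qed
  show ?thesis
  proof (rule inj_onI, clarify)
    fix w j w' j'
    assume "w \<in> W" "j < ?p" "w' \<in> W" "j' < ?p"
      and eq: "w + of_nat j * v = w' + of_nat j' * v"
    then have "j = j'"
      using no_collision by (metis linorder_neqE_nat)
    with eq show "w = w' \<and> j = j'"
      by simp
  qed
qed

lemma add_closed_extend:
  fixes W :: "'a::{finite,field} set"
  assumes W: "add_closed W" and v: "v \<notin> W"
  defines "W' \<equiv> (\<lambda>(w, j). w + of_nat j * v) ` (W \<times> {..<CHAR('a)})"
  shows "add_closed W'" and "insert v W \<subseteq> W'" and "card W' = CHAR('a) * card W"
proof -
  let ?p = "CHAR('a)"
  have p: "1 < ?p"
    using prime_CHAR_finite_field prime_gt_1_nat by blast
  show "card W' = ?p * card W"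
    unfolding W'_def using inj_on_add_closed_extend[OF W v]
    by (simp add: card_image card_cartesian_product)
  show "add_closed W'"
    unfolding add_closed_def
  proof (intro conjI ballI)
    show "0 \<in> W'"
      unfolding W'_def using W p by (auto simp: add_closed_def intro!: image_eqI[where x="(0, 0)"])
    fix x y
    assume "x \<in> W'" "y \<in> W'"
    then obtain w j w' j' where "w \<in> W" "w' \<in> W" "x = w + of_nat j * v" "y = w' + of_nat j' * v"
      unfolding W'_def by auto
    moreover from this have "x + y = (w + w') + of_nat ((j + j') mod ?p) * v"
      by (simp add: of_nat_mod_CHAR algebra_simps)
    ultimately show "x + y \<in> W'"
      unfolding W'_def using W p
      by (auto simp: add_closed_def intro!: image_eqI[where x="(w + w', (j + j') mod ?p)"])
  qed
  show "insert v W \<subseteq> W'"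
  proof
    fix x
    assume "x \<in> insert v W"
    then consider "x = v" | "x \<in> W"
      by blast
    then show "x \<in> W'"
    proof cases
      case 1
      then show ?thesis
        unfolding W'_def using W p by (auto simp: add_closed_def intro!: image_eqI[where x="(0, 1)"])
    next
      case 2
      then show ?thesis
        unfolding W'_def using p by (auto intro!: image_eqI[where x="(x, 0)"])
    qed
  qed
qed

text \<open>A finite field is a vector space over its prime field; adjoining one vector at a time
  multiplies the size of an additively closed set by the characteristic.\<close>

lemma card_finite_field_CHAR_power: "\<exists>n. CARD('a::{finite,field}) = CHAR('a) ^ n"
proof -
  have "\<exists>W n. add_closed W \<and> S \<subseteq> W \<and> card W = CHAR('a) ^ n" if "finite S" for S :: "'a set"
    using that
  proof (induction S rule: finite_induct)
    case empty
    have "add_closed {0::'a}"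
      by (simp add: add_closed_def)
    then show ?case
      by (intro exI[of _ "{0}"] exI[of _ 0]) auto
  next
    case (insert v S)
    then obtain W n where W: "add_closed W" "S \<subseteq> W" "card W = CHAR('a) ^ n"
      by blast
    show ?case
    proof (cases "v \<in> W")
      case True
      then show ?thesis
        using W by blast
    next
      case False
      let ?W' = "(\<lambda>(w, j). w + of_nat j * v) ` (W \<times> {..<CHAR('a)})"
      have "add_closed ?W'" "insert v S \<subseteq> ?W'" "card ?W' = CHAR('a) ^ Suc n"
        using add_closed_extend[OF W(1) False] W by auto
      then show ?thesis
        by blast
    qed
  qed
  from this[of UNIV] show ?thesis
    by (metis finite top.extremum_uniqueI)
qed

lemma CARD_eq_CHAR_power_fq_deg: "CARD('a) = CHAR('a) ^ fq_deg TYPE('a::{finite,field})"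
  unfolding fq_deg_def by (rule LeastI_ex) (rule card_finite_field_CHAR_power)

lemma fq_deg_pos: "0 < fq_deg TYPE('a::{finite,field})"
proof (rule ccontr)
  assume "\<not> ?thesis"
  then have "CARD('a) = 1"
    using CARD_eq_CHAR_power_fq_deg[where 'a='a] by simp
  moreover have "card {0, 1::'a} \<le> CARD('a)"
    by (rule card_mono) auto
  ultimately show False
    by simp
qed

lemma two_neq_zero_if_odd_card:
  assumes "odd CARD('a::{finite,field})"
  shows "(2::'a) \<noteq> 0"
proof
  assume "(2::'a) = 0"
  then have "CHAR('a) dvd 2"
    using of_nat_eq_0_iff_char_dvd[where 'a='a, of 2] by simp
  then have "CHAR('a) = 2"
    using prime_CHAR_finite_field two_is_prime_nat primes_dvd_imp_eq by blast
  then show False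
    using assms CARD_eq_CHAR_power_fq_deg[where 'a='a] fq_deg_pos[where 'a='a] by simp
qed

lemma sum_UNIV_mult_reindex:
  fixes f :: "'a::{finite,field} \<Rightarrow> 'b::comm_monoid_add"
  assumes "a \<noteq> 0"
  shows "(\<Sum>x\<in>UNIV. f (a * x)) = (\<Sum>x\<in>UNIV. f x)"
  by (rule sum.reindex_bij_witness[where i="\<lambda>y. y / a" and j="\<lambda>x. a * x"]) (use assms in auto)

lemma sum_UNIV_add_reindex:
  fixes f :: "'a::{finite,ab_group_add} \<Rightarrow> 'b::comm_monoid_add"
  shows "(\<Sum>x\<in>UNIV. f (x + c)) = (\<Sum>x\<in>UNIV. f x)"
  by (rule sum.reindex_bij_witness[where i="\<lambda>y. y - c" and j="\<lambda>x. x + c"]) auto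

section \<open>The canonical additive character\<close>

lemma fq_trace_add: "fq_trace (a + b) = fq_trace a + fq_trace (b :: 'a::{finite,field})"
  unfolding fq_trace_def by (simp add: freshmans_dream'[OF prime_CHAR_finite_field refl] sum.distrib)

lemma fq_trace_power_CHAR: "fq_trace c ^ CHAR('a) = fq_trace (c :: 'a::{finite,field})"
proof -
  let ?p = "CHAR('a)" and ?n = "fq_deg TYPE('a)"
  let ?f = "\<lambda>j. c ^ (?p ^ j)"
  have "fq_trace c ^ ?p = (\<Sum>j<?n. ?f (Suc j))"
    unfolding fq_trace_def
    by (simp add: freshmans_dream_sum[OF prime_CHAR_finite_field refl] flip: power_mult)
      (simp add: mult.commute)
  moreover have "(\<Sum>j<Suc ?n. ?f j) = ?f 0 + (\<Sum>j<?n. ?f (Suc j))"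
    by (rule sum.lessThan_Suc_shift)
  moreover have "(\<Sum>j<Suc ?n. ?f j) = (\<Sum>j<?n. ?f j) + ?f ?n"
    by (rule sum.lessThan_Suc)
  moreover have "?f ?n = ?f 0"
    using finite_field_power_card_eq_self[of c] by (simp flip: CARD_eq_CHAR_power_fq_deg)
  ultimately show ?thesis
    unfolding fq_trace_def by (metis add.commute add_left_cancel)
qed

lemma of_nat_power_CHAR: "(of_nat k :: 'a::{finite,field}) ^ CHAR('a) = of_nat k"
  using prime_gt_0_nat[OF prime_CHAR_finite_field[where 'a='a]]
  by (induction k) (simp_all add: freshmans_dream[OF prime_CHAR_finite_field refl] power_0_left)

text \<open>The roots of \<open>X^p - X\<close> are exactly the \<open>p\<close> elements of the prime field.\<close>

lemma power_CHAR_eq_self_imp_of_nat: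
  fixes y :: "'a::{finite,field}"
  assumes "y ^ CHAR('a) = y"
  shows "\<exists>k<CHAR('a). of_nat k = y"
proof -
  let ?p = "CHAR('a)"
  let ?F = "of_nat ` {..<?p} :: 'a set" and ?R = "{y::'a. y ^ ?p = y}"
  define P :: "'a poly" where "P = monom 1 ?p - monom 1 1"
  have p: "1 < ?p"
    using prime_CHAR_finite_field prime_gt_1_nat by blast
  then have "coeff P ?p = 1"
    by (simp add: P_def)
  then have "P \<noteq> 0"
    by auto
  moreover have "degree P \<le> ?p"
    unfolding P_def using p by (intro degree_diff_le) (auto intro: order_trans[OF degree_monom_le])
  ultimately have "card {y. poly P y = 0} \<le> ?p"
    using card_poly_roots_bound order_trans by blast
  moreover have "{y. poly P y = 0} = ?R"
    by (simp add: P_def poly_monom)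
  ultimately have R: "card ?R \<le> ?p"
    by simp
  have sub: "?F \<subseteq> ?R"
    using of_nat_power_CHAR by auto
  have F: "card ?F = ?p"
    by (subst card_image) (auto simp: inj_on_def of_nat_eq_iff_cong_CHAR cong_def)
  have "?F = ?R"
    by (rule card_subset_eq[OF finite sub]) (use card_mono[OF finite sub] R F in linarith)
  with assms have "y \<in> ?F"
    by simp
  then show ?thesis
    by force
qed

lemma fq_trace_nat:
  fixes c :: "'a::{finite,field}"
  shows "fq_trace_nat c < CHAR('a)" and "of_nat (fq_trace_nat c) = fq_trace c"
proof -
  obtain k where k: "k < CHAR('a)" "of_nat k = fq_trace c"
    using power_CHAR_eq_self_imp_of_nat[OF fq_trace_power_CHAR] by blast
  moreover have "k' = k" if "k' < CHAR('a)" "of_nat k' = fq_trace c" for k'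
  proof -
    have "(of_nat k' :: 'a) = of_nat k"
      using that k by simp
    then show ?thesis
      using that(1) k(1) by (simp add: of_nat_eq_iff_cong_CHAR cong_def)
  qed
  ultimately have "\<exists>!k. k < CHAR('a) \<and> of_nat k = fq_trace c"
    by blast
  from theI'[OF this] show "fq_trace_nat c < CHAR('a)" "of_nat (fq_trace_nat c) = fq_trace c"
    unfolding fq_trace_nat_def by auto
qed

lemma can_chi_eq_cis:
  fixes c :: "'a::{finite,field}"
  assumes "of_nat k = fq_trace c"
  shows "can_chi c = cis (2 * pi * k / CHAR('a))"
proof -
  let ?p = "CHAR('a)"
  have p: "0 < real ?p"
    using prime_gt_0_nat[OF prime_CHAR_finite_field[where 'a='a]] by simp
  have "(of_nat (fq_trace_nat c) :: 'a) = of_nat k"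
    using assms fq_trace_nat(2) by simp
  then have t: "fq_trace_nat c = k mod ?p"
    using fq_trace_nat(1)[of c] by (simp add: of_nat_eq_iff_cong_CHAR cong_def)
  have "real k = real (k mod ?p) + real ?p * real (k div ?p)"
    by (metis mod_mult_div_eq of_nat_add of_nat_mult)
  then have "2 * pi * k / ?p = 2 * pi * (k mod ?p) / ?p + 2 * pi * real (k div ?p)"
    using p by (simp add: field_simps)
  then have "cis (2 * pi * k / ?p) = cis (2 * pi * (k mod ?p) / ?p) * cis (2 * pi * real (k div ?p))"
    by (simp only: cis_mult)
  also have "cis (2 * pi * real (k div ?p)) = 1"
    by (rule cis_multiple_2pi) simp
  finally show ?thesis
    unfolding can_chi_def t by simp
qed

lemma can_chi_add: "can_chi (a + b) = can_chi a * can_chi (b :: 'a::{finite,field})"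
proof -
  have "of_nat (fq_trace_nat a + fq_trace_nat b) = fq_trace (a + b)"
    by (simp add: fq_trace_nat fq_trace_add)
  then have "can_chi (a + b) = cis (2 * pi * (fq_trace_nat a + fq_trace_nat b) / CHAR('a))"
    by (rule can_chi_eq_cis)
  also have "\<dots> = can_chi a * can_chi b"
    unfolding can_chi_def by (simp add: cis_mult add_divide_distrib distrib_left)
  finally show ?thesis .
qed

lemma can_chi_0: "can_chi (0::'a::{finite,field}) = 1"
proof -
  have "of_nat 0 = fq_trace (0::'a)"
    using prime_gt_0_nat[OF prime_CHAR_finite_field[where 'a='a]]
    by (simp add: fq_trace_def power_0_left)
  from can_chi_eq_cis[OF this] show ?thesis
    by simp
qed

lemma can_chi_sum: "can_chi (\<Sum>i\<in>I. f i :: 'a::{finite,field}) = (\<Prod>i\<in>I. can_chi (f i))"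
  by (induction I rule: infinite_finite_induct) (simp_all add: can_chi_0 can_chi_add)

text \<open>As a polynomial the trace has degree \<open>p\<^sup>n\<^sup>-\<^sup>1 < q\<close>, so it is not identically zero.\<close>

lemma fq_trace_not_zero: "\<exists>c::'a::{finite,field}. fq_trace c \<noteq> 0"
proof -
  let ?p = "CHAR('a)" and ?n = "fq_deg TYPE('a)"
  define T :: "'a poly" where "T = (\<Sum>j<?n. monom 1 (?p ^ j))"
  have n: "0 < ?n"
    by (rule fq_deg_pos)
  have p: "1 < ?p"
    using prime_CHAR_finite_field prime_gt_1_nat by blast
  have "coeff T (?p ^ (?n - 1)) = (\<Sum>j<?n. if j = ?n - 1 then 1 else 0)"
    unfolding T_def coeff_sum coeff_monom using p by (intro sum.cong) auto
  then have "coeff T (?p ^ (?n - 1)) = 1"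
    using n by simp
  then have "T \<noteq> 0"
    by auto
  moreover have "degree T \<le> ?p ^ (?n - 1)"
    unfolding T_def using p
    by (intro degree_sum_le) (auto intro: order_trans[OF degree_monom_le] power_increasing)
  ultimately have "card {c. poly T c = 0} \<le> ?p ^ (?n - 1)"
    using card_poly_roots_bound order_trans by blast
  also have "\<dots> < CARD('a)"
    using p n by (simp add: CARD_eq_CHAR_power_fq_deg[where 'a='a] power_strict_increasing)
  finally have "{c. poly T c = 0} \<noteq> UNIV"
    by auto
  then obtain c where "poly T c \<noteq> 0"
    by auto
  moreover have "poly T c = fq_trace c"
    unfolding T_def fq_trace_def by (simp add: poly_sum poly_monom)
  ultimately show ?thesis
    by auto
qed

lemma can_chi_nontrivial: "\<exists>c::'a::{finite,field}. can_chi c \<noteq> 1"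
proof -
  obtain c :: 'a where "fq_trace c \<noteq> 0"
    using fq_trace_not_zero by blast
  then have k: "0 < fq_trace_nat c" "fq_trace_nat c < CHAR('a)"
    using fq_trace_nat[of c] by (auto intro: gr0I)
  have "can_chi c \<noteq> 1"
  proof
    assume "can_chi c = 1"
    then obtain m :: int where "2 * pi * fq_trace_nat c / CHAR('a) = m * (2 * pi)"
      unfolding can_chi_def cis_eq_1_iff by blast
    then have "real (fq_trace_nat c) = m * real CHAR('a)"
      using k by (simp add: field_simps)
    then have m: "int (fq_trace_nat c) = m * int CHAR('a)"
      by (metis of_int_eq_iff of_int_mult of_int_of_nat_eq)
    then have "0 < m * int CHAR('a)"
      using k(1) by linarith
    then have "0 < m"
      by (simp add: zero_less_mult_iff)
    then have "int CHAR('a) \<le> m * int CHAR('a)"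
      using mult_right_mono[of 1 m "int CHAR('a)"] by simp
    then show False
      using k m by linarith
  qed
  then show ?thesis
    by blast
qed

lemma sum_can_chi_mult:
  fixes b :: "'a::{finite,field}"
  shows "(\<Sum>x\<in>UNIV. can_chi (b * x)) = (if b = 0 then of_nat CARD('a) else 0)"
proof (cases "b = 0")
  case True
  then show ?thesis
    by (simp add: can_chi_0)
next
  case False
  obtain c :: 'a where c: "can_chi c \<noteq> 1"
    using can_chi_nontrivial by blast
  have "(\<Sum>x\<in>UNIV. can_chi (b * x)) = (\<Sum>x::'a\<in>UNIV. can_chi x)"
    using sum_UNIV_mult_reindex[OF False, of can_chi] .
  moreover have "(\<Sum>x::'a\<in>UNIV. can_chi x) = can_chi c * (\<Sum>x::'a\<in>UNIV. can_chi x)"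
    using sum_UNIV_add_reindex[of can_chi c]
    by (simp add: can_chi_add sum_distrib_left mult.commute)
  ultimately show ?thesis
    using c False by simp
qed

lemma sum_nonzero_can_chi_divide:
  fixes t :: "'a::{finite,field}"
  shows "(\<Sum>s\<in>UNIV - {0}. can_chi (t / s)) = (if t = 0 then of_nat CARD('a) else 0) - 1"
proof -
  have "(\<Sum>s\<in>UNIV - {0}. can_chi (t / s)) = (\<Sum>u\<in>UNIV - {0}. can_chi (t * u))"
    by (rule sum.reindex_bij_witness[where i=inverse and j=inverse]) (auto simp: divide_inverse)
  also have "\<dots> = (\<Sum>u\<in>UNIV. can_chi (t * u)) - can_chi (t * 0)"
    by (simp add: sum_diff1)
  finally show ?thesis
    by (simp add: sum_can_chi_mult can_chi_0)
qed

section \<open>The quadratic character and Gauss sums\<close>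

lemma qchar_0 [simp]: "qchar 0 = 0"
  by (simp add: qchar_def)

lemma qchar_1 [simp]: "qchar (1::'a::{finite,field}) = 1"
  by (simp add: qchar_def) (metis power_one)

lemma qchar_square_eq_1: "a \<noteq> 0 \<Longrightarrow> qchar a * qchar a = 1"
  by (simp add: qchar_def)

lemma qchar_square_mult:
  fixes y b :: "'a::{finite,field}"
  assumes "y \<noteq> 0"
  shows "qchar (y ^ 2 * b) = qchar b"
proof -
  have "(\<exists>z. z ^ 2 = y ^ 2 * b) \<longleftrightarrow> (\<exists>z. z ^ 2 = b)"
  proof
    assume "\<exists>z. z ^ 2 = y ^ 2 * b"
    then obtain z where "z ^ 2 = y ^ 2 * b"
      by blast
    then have "(z / y) ^ 2 = b"
      using assms by (simp add: power_divide)
    then show "\<exists>z. z ^ 2 = b"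
      by blast
  next
    assume "\<exists>z. z ^ 2 = b"
    then obtain z where "z ^ 2 = b"
      by blast
    then have "(y * z) ^ 2 = y ^ 2 * b"
      by (simp add: power_mult_distrib)
    then show "\<exists>z. z ^ 2 = y ^ 2 * b"
      by blast
  qed
  then show ?thesis
    using assms by (simp add: qchar_def)
qed

lemma card_square_roots:
  fixes t :: "'a::{finite,field}"
  assumes two: "(2::'a) \<noteq> 0"
  shows "int (card {y. y ^ 2 = t}) = 1 + qchar t"
proof (cases "\<exists>y. y ^ 2 = t")
  case True
  then obtain y where y: "y ^ 2 = t"
    by blast
  have "{z. z ^ 2 = t} = {y, - y}"
    using y by (auto simp: power2_eq_iff)
  moreover have "y = - y \<longleftrightarrow> t = 0"
    using two y by (auto simp: eq_neg_iff_add_eq_0 simp flip: mult_2)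
  ultimately show ?thesis
    using True by (auto simp: qchar_def)
next
  case False
  then have "t \<noteq> 0"
    by (metis zero_power2)
  with False show ?thesis
    by (simp add: qchar_def)
qed

lemma sum_qchar:
  assumes two: "(2::'a::{finite,field}) \<noteq> 0"
  shows "(\<Sum>t\<in>UNIV. qchar (t::'a)) = 0"
proof -
  have "(\<Sum>t\<in>UNIV. card {y::'a. y ^ 2 = t}) = CARD('a)"
    using sum.group[of UNIV UNIV "\<lambda>y::'a. y ^ 2" "\<lambda>_. 1::nat"] by simp
  then have "(\<Sum>t\<in>UNIV. 1 + qchar (t::'a)) = int CARD('a)"
    by (simp flip: card_square_roots[OF two] of_nat_sum)
  then show ?thesis
    by (simp add: sum.distrib)
qed

lemma card_nonzero_squares_eq_card_nonsquares:
  assumes two: "(2::'a::{finite,field}) \<noteq> 0"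
  shows "card {t::'a. t \<noteq> 0 \<and> (\<exists>y. y ^ 2 = t)} = card {t::'a. \<nexists>y. y ^ 2 = t}"
proof -
  let ?S = "{t::'a. t \<noteq> 0 \<and> (\<exists>y. y ^ 2 = t)}" and ?N = "{t::'a. \<nexists>y. y ^ 2 = t}"
  have "qchar t = of_bool (t \<in> ?S) - of_bool (t \<in> ?N)" for t :: 'a
    by (auto simp: qchar_def)
  then have "(\<Sum>t\<in>UNIV. qchar (t::'a)) = int (card ?S) - int (card ?N)"
    by (simp add: sum_subtractf)
  then show ?thesis
    using sum_qchar[OF two] by simp
qed

text \<open>Multiplication by a nonsquare maps the nonzero squares injectively into the nonsquares,
  and the two sets have the same size.\<close>

lemma mult_nonsquares_square:
  fixes a b :: "'a::{finite,field}"
  assumes two: "(2::'a) \<noteq> 0" and a: "\<nexists>y. y ^ 2 = a" and b: "\<nexists>y. y ^ 2 = b"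
  shows "\<exists>z. z ^ 2 = a * b"
proof -
  let ?S = "{t::'a. t \<noteq> 0 \<and> (\<exists>y. y ^ 2 = t)}" and ?N = "{t::'a. \<nexists>y. y ^ 2 = t}"
  have a0: "a \<noteq> 0"
    using a by (metis zero_power2)
  have "a * s \<in> ?N" if "s \<in> ?S" for s
  proof -
    from that obtain z where "z ^ 2 = s"
      by auto
    moreover from this have "z \<noteq> 0"
      using that by auto
    ultimately have z: "z \<noteq> 0" "z ^ 2 = s"
      by blast+
    have "\<nexists>y. y ^ 2 = a * s"
    proof
      assume "\<exists>y. y ^ 2 = a * s"
      then obtain y where "y ^ 2 = a * z ^ 2"
        using z by auto
      then have "(y / z) ^ 2 = a"
        using z that by (simp add: power_divide)
      with a show False
        by blast
    qed
    then show ?thesis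
      by simp
  qed
  then have "(\<lambda>s. a * s) ` ?S \<subseteq> ?N"
    by blast
  moreover have "card ((\<lambda>s. a * s) ` ?S) = card ?N"
    using card_nonzero_squares_eq_card_nonsquares[OF two] a0 by (simp add: card_image inj_on_def)
  ultimately have "(\<lambda>s. a * s) ` ?S = ?N"
    by (intro card_subset_eq) auto
  then obtain z where "b = a * z ^ 2"
    using b by blast
  then have "(a * z) ^ 2 = a * b"
    by (simp add: power2_eq_square mult_ac)
  then show ?thesis
    by blast
qed

lemma qchar_mult:
  fixes a b :: "'a::{finite,field}"
  assumes two: "(2::'a) \<noteq> 0"
  shows "qchar (a * b) = qchar a * qchar b"
proof (cases "a = 0 \<or> b = 0")
  case True
  then show ?thesis
    by auto
next
  case False
  consider (square_a) y where "y ^ 2 = a" | (square_b) y where "y ^ 2 = b"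
    | (nonsquares) "\<nexists>y. y ^ 2 = a" "\<nexists>y. y ^ 2 = b"
    by blast
  then show ?thesis
  proof cases
    case square_a
    with False have "y \<noteq> 0" "qchar a = 1"
      by (auto simp: qchar_def)
    moreover have "qchar (a * b) = qchar b"
      using qchar_square_mult[OF \<open>y \<noteq> 0\<close>, of b] square_a by simp
    ultimately show ?thesis
      by simp
  next
    case square_b
    with False have "y \<noteq> 0" "qchar b = 1"
      by (auto simp: qchar_def)
    moreover have "qchar (a * b) = qchar a"
      using qchar_square_mult[OF \<open>y \<noteq> 0\<close>, of a] square_b by (simp add: mult.commute)
    ultimately show ?thesis
      by simp
  next
    case nonsquares
    then have "\<exists>z. z ^ 2 = a * b"
      by (rule mult_nonsquares_square[OF two])
    with False nonsquares show ?thesis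
      by (simp add: qchar_def)
  qed
qed

lemma qchar_prod:
  assumes two: "(2::'a::{finite,field}) \<noteq> 0"
  shows "qchar (\<Prod>i\<in>I. f i :: 'a) = (\<Prod>i\<in>I. qchar (f i))"
  by (induction I rule: infinite_finite_induct) (simp_all add: qchar_mult[OF two])

lemma qchar_power:
  assumes two: "(2::'a::{finite,field}) \<noteq> 0"
  shows "qchar (a ^ n :: 'a) = qchar a ^ n"
  by (induction n) (simp_all add: qchar_mult[OF two])

lemma qchar_power_parity:
  fixes r :: "'a::{finite,field}"
  assumes "r \<noteq> 0"
  shows "qchar r ^ n = (if even n then 1 else qchar r)"
  using assms by (simp add: qchar_def)

definition quad_char_sum :: "'a::{finite,field} \<Rightarrow> complex" where
  "quad_char_sum a = (\<Sum>x\<in>UNIV. can_chi (a * x ^ 2))"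

definition gauss_sum :: "'a::{finite,field} itself \<Rightarrow> complex" where
  "gauss_sum t = (\<Sum>u\<in>UNIV. of_int (qchar (u::'a)) * can_chi u)"

lemma quad_char_sum_eq_gauss_sum:
  fixes a :: "'a::{finite,field}"
  assumes two: "(2::'a) \<noteq> 0" and a: "a \<noteq> 0"
  shows "quad_char_sum a = of_int (qchar a) * gauss_sum TYPE('a)"
proof -
  have "quad_char_sum a = (\<Sum>t\<in>UNIV. of_nat (card {x::'a. x ^ 2 = t}) * can_chi (a * t))"
    unfolding quad_char_sum_def
    using sum.group[of UNIV UNIV "\<lambda>x::'a. x ^ 2" "\<lambda>x. can_chi (a * x ^ 2)"] by simp
  also have "\<dots> = (\<Sum>t\<in>UNIV. can_chi (a * t)) + (\<Sum>t\<in>UNIV. of_int (qchar t) * can_chi (a * t))"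
  proof -
    have "of_nat (card {x::'a. x ^ 2 = t}) = (1 + of_int (qchar t) :: complex)" for t
      using arg_cong[OF card_square_roots[OF two, of t], of "of_int :: int \<Rightarrow> complex"] by simp
    then show ?thesis
      by (simp add: distrib_right sum.distrib)
  qed
  also have "(\<Sum>t\<in>UNIV. can_chi (a * t)) = 0"
    using a by (simp add: sum_can_chi_mult)
  also have "(\<Sum>t\<in>UNIV. of_int (qchar t) * can_chi (a * t))
      = (\<Sum>t\<in>UNIV. of_int (qchar a) * (of_int (qchar (a * t)) * can_chi (a * t)))"
  proof (rule sum.cong)
    fix t :: 'a
    have "qchar t = qchar (a ^ 2 * t)"
      using a by (simp add: qchar_square_mult)
    also have "\<dots> = qchar a * qchar (a * t)"
      by (simp add: power2_eq_square qchar_mult[OF two] mult.assoc)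
    finally show "of_int (qchar t) * can_chi (a * t)
        = of_int (qchar a) * (of_int (qchar (a * t)) * can_chi (a * t))"
      by simp
  qed simp
  also have "\<dots> = of_int (qchar a) * gauss_sum TYPE('a)"
    unfolding gauss_sum_def sum_distrib_left[symmetric]
    using sum_UNIV_mult_reindex[OF a, of "\<lambda>u. of_int (qchar u) * can_chi u"] by simp
  finally show ?thesis
    by simp
qed

lemma gauss_sum_square:
  assumes two: "(2::'a::{finite,field}) \<noteq> 0"
  shows "gauss_sum TYPE('a) ^ 2 = of_int (qchar (-1::'a)) * of_nat CARD('a)"
proof -
  let ?\<eta> = "\<lambda>u::'a. (of_int (qchar u) :: complex)"
  have sum_\<eta>: "(\<Sum>u\<in>UNIV. ?\<eta> u) = 0"
    using sum_qchar[OF two] by (simp flip: of_int_sum)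
  \<comment> \<open>Substituting \<open>t = s u\<close> removes \<open>\<eta>(s)\<close>.\<close>
  have inner: "(\<Sum>t\<in>UNIV. ?\<eta> s * ?\<eta> t * can_chi (s + t)) = (\<Sum>u\<in>UNIV. ?\<eta> u * can_chi (s * (1 + u)))"
    for s :: 'a
  proof (cases "s = 0")
    case True
    then show ?thesis
      using sum_\<eta> by (simp add: can_chi_0)
  next
    case False
    have "(\<Sum>t\<in>UNIV. ?\<eta> s * ?\<eta> t * can_chi (s + t))
        = (\<Sum>u\<in>UNIV. ?\<eta> s * ?\<eta> (s * u) * can_chi (s + s * u))"
      using sum_UNIV_mult_reindex[OF False, of "\<lambda>t. ?\<eta> s * ?\<eta> t * can_chi (s + t)"] by simp
    also have "\<dots> = (\<Sum>u\<in>UNIV. ?\<eta> u * can_chi (s * (1 + u)))"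
    proof (rule sum.cong)
      fix u
      have "qchar s * qchar (s * u) = qchar u"
        using qchar_square_eq_1[OF False] by (simp add: qchar_mult[OF two] mult.assoc[symmetric])
      then have "?\<eta> s * ?\<eta> (s * u) = ?\<eta> u"
        by (metis of_int_mult)
      then show "?\<eta> s * ?\<eta> (s * u) * can_chi (s + s * u) = ?\<eta> u * can_chi (s * (1 + u))"
        by (simp add: distrib_left)
    qed simp
    finally show ?thesis .
  qed
  have "gauss_sum TYPE('a) ^ 2 = (\<Sum>s\<in>UNIV. \<Sum>t\<in>UNIV. ?\<eta> s * ?\<eta> t * can_chi (s + t))"
    unfolding gauss_sum_def power2_eq_square sum_product by (simp add: can_chi_add mult_ac)
  also have "\<dots> = (\<Sum>u\<in>UNIV. ?\<eta> u * (\<Sum>s\<in>UNIV. can_chi ((1 + u) * s)))"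
    unfolding inner by (subst sum.swap) (simp add: sum_distrib_left mult.commute)
  also have "\<dots> = (\<Sum>u\<in>UNIV. if u = -1 then ?\<eta> u * of_nat CARD('a) else 0)"
    by (rule sum.cong) (auto simp: sum_can_chi_mult add_eq_0_iff)
  also have "\<dots> = ?\<eta> (-1) * of_nat CARD('a)"
    by simp
  finally show ?thesis .
qed

lemma prod_quad_char_sum_even:
  fixes c :: "nat \<Rightarrow> 'a::{finite,field}"
  assumes two: "(2::'a) \<noteq> 0" and c: "\<And>i. i < 2 * k \<Longrightarrow> c i \<noteq> 0"
  shows "(\<Prod>i<2 * k. quad_char_sum (c i))
    = of_int (qchar ((-1) ^ k * (\<Prod>i<2 * k. c i))) * of_nat CARD('a) ^ k"
proof -
  have "(\<Prod>i<2 * k. quad_char_sum (c i)) = (\<Prod>i<2 * k. of_int (qchar (c i)) * gauss_sum TYPE('a))"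
    using c by (intro prod.cong) (simp_all add: quad_char_sum_eq_gauss_sum[OF two])
  also have "\<dots> = of_int (qchar (\<Prod>i<2 * k. c i)) * (gauss_sum TYPE('a) ^ 2) ^ k"
    by (simp add: prod.distrib qchar_prod[OF two] power_mult)
  also have "\<dots> = of_int (qchar ((-1) ^ k * (\<Prod>i<2 * k. c i))) * of_nat CARD('a) ^ k"
    by (simp add: gauss_sum_square[OF two] power_mult_distrib qchar_mult[OF two] qchar_power[OF two])
  finally show ?thesis .
qed

lemma sum_can_chi_complete_square:
  fixes a m :: "'a::{finite,field}"
  assumes two: "(2::'a) \<noteq> 0" and a: "a \<noteq> 0"
  shows "(\<Sum>x\<in>UNIV. can_chi (a * x ^ 2 - m * x)) = can_chi (- (m ^ 2 / (4 * a))) * quad_char_sum a"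
proof -
  let ?c = "m / (2 * a)"
  have four: "(4::'a) \<noteq> 0"
    using two by (metis mult_eq_0_iff numeral_Bit0 mult_2)
  have ring: "a * (y + c) ^ 2 - 2 * a * c * (y + c) = - (a * c ^ 2) + a * y ^ 2" for y c
    by (simp add: power2_eq_square algebra_simps)
  have "2 * a * ?c = m" "a * ?c ^ 2 = m ^ 2 / (4 * a)"
    using two four a by (simp_all add: power2_eq_square field_simps)
  then have square: "a * (y + ?c) ^ 2 - m * (y + ?c) = - (m ^ 2 / (4 * a)) + a * y ^ 2" for y
    using ring[of y ?c] by simp
  have "(\<Sum>x\<in>UNIV. can_chi (a * x ^ 2 - m * x)) = (\<Sum>y\<in>UNIV. can_chi (a * (y + ?c) ^ 2 - m * (y + ?c)))"
    by (rule sum_UNIV_add_reindex[symmetric])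
  also have "\<dots> = can_chi (- (m ^ 2 / (4 * a))) * quad_char_sum a"
    unfolding square can_chi_add quad_char_sum_def sum_distrib_left by (rule refl)
  finally show ?thesis .
qed

section \<open>Fourier transform of a diagonal quadric\<close>

lemma sum_fvecs_prod:
  fixes f :: "nat \<Rightarrow> 'a::{finite,field} \<Rightarrow> 'b::comm_semiring_1"
  shows "(\<Sum>X\<in>fvecs n. \<Prod>i<n. f i (X i)) = (\<Prod>i<n. \<Sum>x\<in>UNIV. f i x)"
proof -
  have "(\<Sum>X\<in>fvecs n. \<Prod>i<n. f i (X i)) = (\<Sum>g\<in>PiE {..<n} (\<lambda>_. UNIV). \<Prod>i<n. f i (g i))"
    by (rule sum.reindex_bij_witness[where j="\<lambda>X. restrict X {..<n}"
          and i="\<lambda>g i. if i < n then g i else 0"])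
      (auto simp: fvecs_def fun_eq_iff PiE_def extensional_def not_less)
  also have "\<dots> = (\<Prod>i<n. \<Sum>x\<in>UNIV. f i x)"
    by (rule prod_sum_PiE[symmetric]) auto
  finally show ?thesis .
qed

lemma sum_fvecs_can_chi_sum:
  fixes f :: "nat \<Rightarrow> 'a::{finite,field} \<Rightarrow> 'a"
  shows "(\<Sum>X\<in>fvecs n. can_chi (\<Sum>i<n. f i (X i))) = (\<Prod>i<n. \<Sum>x\<in>UNIV. can_chi (f i x))"
  unfolding can_chi_sum by (rule sum_fvecs_prod)

lemma ffourier_diagonal_quadric_char_sum:
  fixes c M :: "nat \<Rightarrow> 'a::{finite,field}"
  shows "ffourier n (ind {X \<in> fvecs n. (\<Sum>i<n. c i * X i ^ 2) = 0}) M
    = (\<Sum>s\<in>UNIV. \<Prod>i<n. \<Sum>x\<in>UNIV. can_chi (s * c i * x ^ 2 - M i * x)) / of_nat CARD('a) ^ (n + 1)"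
proof -
  let ?q = "of_nat CARD('a) :: complex"
  let ?V = "{X \<in> fvecs n. (\<Sum>i<n. c i * X i ^ 2) = 0}"
  let ?S = "\<lambda>s X. can_chi (\<Sum>i<n. s * c i * X i ^ 2 - M i * X i)"
  have summand: "can_chi (- fdot n M X) * ind ?V X = (\<Sum>s\<in>UNIV. ?S s X) / ?q"
    if "X \<in> fvecs n" for X
  proof -
    have "?S s X = can_chi (- fdot n M X) * can_chi ((\<Sum>i<n. c i * X i ^ 2) * s)" for s
    proof -
      have "(\<Sum>i<n. s * c i * X i ^ 2 - M i * X i) = (\<Sum>i<n. c i * X i ^ 2) * s + - fdot n M X"
        by (simp add: fdot_def sum_subtractf sum_distrib_left sum_distrib_right mult_ac)
      then show ?thesis
        by (simp only: can_chi_add mult.commute)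
    qed
    then have "(\<Sum>s\<in>UNIV. ?S s X)
        = can_chi (- fdot n M X) * (\<Sum>s\<in>UNIV. can_chi ((\<Sum>i<n. c i * X i ^ 2) * s))"
      by (simp add: sum_distrib_left)
    then show ?thesis
      using that by (simp add: ind_def sum_can_chi_mult)
  qed
  have factor: "(\<Sum>X\<in>fvecs n. ?S s X) = (\<Prod>i<n. \<Sum>x\<in>UNIV. can_chi (s * c i * x ^ 2 - M i * x))" for s
    by (rule sum_fvecs_can_chi_sum[where f="\<lambda>i x. s * c i * x ^ 2 - M i * x"])
  have "(\<Sum>X\<in>fvecs n. can_chi (- fdot n M X) * ind ?V X) = (\<Sum>X\<in>fvecs n. \<Sum>s\<in>UNIV. ?S s X) / ?q"
    by (simp add: summand sum_divide_distrib)
  also have "\<dots> = (\<Sum>s\<in>UNIV. \<Prod>i<n. \<Sum>x\<in>UNIV. can_chi (s * c i * x ^ 2 - M i * x)) / ?q"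
    by (subst sum.swap) (simp only: factor)
  finally show ?thesis
    unfolding ffourier_def by (simp add: field_simps)
qed

lemma prod_sum_can_chi_linear:
  fixes M :: "nat \<Rightarrow> 'a::{finite,field}"
  assumes "M \<in> fvecs n"
  shows "(\<Prod>i<n. \<Sum>x\<in>UNIV. can_chi (- (M i * x))) = ind {\<lambda>_. 0} M * of_nat CARD('a) ^ n"
proof (cases "M = (\<lambda>_. 0)")
  case True
  then show ?thesis
    by (simp add: ind_def can_chi_0)
next
  case False
  then obtain j where j: "M j \<noteq> 0"
    by auto
  have "j < n"
    by (rule ccontr) (use assms j in \<open>auto simp: fvecs_def\<close>)
  moreover have "(\<Sum>x\<in>UNIV. can_chi (- (M j * x))) = 0"
    using j sum_can_chi_mult[of "- M j"] by simp
  ultimately show ?thesis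
    using False by (auto simp: ind_def intro!: prod_zero bexI[of _ j])
qed

lemma prod_sum_can_chi_quadratic:
  fixes c M :: "nat \<Rightarrow> 'a::{finite,field}"
  assumes two: "(2::'a) \<noteq> 0" and s: "s \<noteq> 0" and c: "\<And>i. i < 2 * k \<Longrightarrow> c i \<noteq> 0"
  shows "(\<Prod>i<2 * k. \<Sum>x\<in>UNIV. can_chi (s * c i * x ^ 2 - M i * x))
    = of_int (qchar ((-1) ^ k * (\<Prod>i<2 * k. c i))) * of_nat CARD('a) ^ k
      * can_chi (- (\<Sum>i<2 * k. M i ^ 2 / c i) / 4 / s)"
proof -
  have "(\<Prod>i<2 * k. \<Sum>x\<in>UNIV. can_chi (s * c i * x ^ 2 - M i * x))
      = (\<Prod>i<2 * k. can_chi (- (M i ^ 2 / c i) / 4 / s) * quad_char_sum (s * c i))"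
  proof (rule prod.cong)
    fix i
    assume "i \<in> {..<2 * k}"
    then have sc: "s * c i \<noteq> 0"
      using s c by simp
    show "(\<Sum>x\<in>UNIV. can_chi (s * c i * x ^ 2 - M i * x))
        = can_chi (- (M i ^ 2 / c i) / 4 / s) * quad_char_sum (s * c i)"
      by (subst sum_can_chi_complete_square[OF two sc]) (simp add: mult_ac)
  qed simp
  also have "\<dots> = can_chi (\<Sum>i<2 * k. - (M i ^ 2 / c i) / 4 / s) * (\<Prod>i<2 * k. quad_char_sum (s * c i))"
    by (simp only: prod.distrib can_chi_sum)
  also have "(\<Sum>i<2 * k. - (M i ^ 2 / c i) / 4 / s) = - (\<Sum>i<2 * k. M i ^ 2 / c i) / 4 / s"
    by (simp add: sum_divide_distrib sum_negf)
  also have "(\<Prod>i<2 * k. quad_char_sum (s * c i))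
      = of_int (qchar ((-1) ^ k * (\<Prod>i<2 * k. s * c i))) * of_nat CARD('a) ^ k"
    using s c by (intro prod_quad_char_sum_even[OF two]) simp
  also have "qchar ((-1) ^ k * (\<Prod>i<2 * k. s * c i)) = qchar ((s ^ k) ^ 2 * ((-1) ^ k * (\<Prod>i<2 * k. c i)))"
    by (simp add: prod.distrib power_mult[symmetric] mult_ac)
  also have "\<dots> = qchar ((-1) ^ k * (\<Prod>i<2 * k. c i))"
    using s by (simp add: qchar_square_mult)
  finally show ?thesis
    by (simp add: mult_ac)
qed

lemma sum_prod_sum_can_chi_quadratic:
  fixes c M :: "nat \<Rightarrow> 'a::{finite,field}"
  assumes two: "(2::'a) \<noteq> 0" and c: "\<And>i. i < 2 * k \<Longrightarrow> c i \<noteq> 0" and M: "M \<in> fvecs (2 * k)"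
  defines "q \<equiv> of_nat CARD('a) :: complex"
  shows "(\<Sum>s\<in>UNIV. \<Prod>i<2 * k. \<Sum>x\<in>UNIV. can_chi (s * c i * x ^ 2 - M i * x))
    = ind {\<lambda>_. 0} M * q ^ (2 * k) + of_int (qchar ((-1) ^ k * (\<Prod>i<2 * k. c i))) * q ^ k
        * (of_bool ((\<Sum>i<2 * k. M i ^ 2 / c i) = 0) * q - 1)"
proof -
  let ?P = "\<lambda>s. \<Prod>i<2 * k. \<Sum>x\<in>UNIV. can_chi (s * c i * x ^ 2 - M i * x)"
  let ?T = "\<Sum>i<2 * k. M i ^ 2 / c i"
  have four: "(4::'a) \<noteq> 0"
    using two by (metis mult_eq_0_iff numeral_Bit0 mult_2)
  have "(\<Sum>s\<in>UNIV. ?P s) = ?P 0 + (\<Sum>s\<in>UNIV - {0}. ?P s)"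
    by (rule sum.remove) simp_all
  also have "?P 0 = ind {\<lambda>_. 0} M * q ^ (2 * k)"
    using prod_sum_can_chi_linear[OF M] by (simp add: q_def)
  also have "(\<Sum>s\<in>UNIV - {0}. ?P s)
      = of_int (qchar ((-1) ^ k * (\<Prod>i<2 * k. c i))) * q ^ k * (\<Sum>s\<in>UNIV - {0}. can_chi (- ?T / 4 / s))"
    by (simp add: prod_sum_can_chi_quadratic[OF two _ c] sum_distrib_left q_def)
  also have "(\<Sum>s\<in>UNIV - {0}. can_chi (- ?T / 4 / s)) = of_bool (?T = 0) * q - 1"
    using sum_nonzero_can_chi_divide[of "- ?T / 4"] four by (simp add: q_def)
  finally show ?thesis .
qed

lemma ffourier_diagonal_quadric:
  fixes c M :: "nat \<Rightarrow> 'a::{finite,field}"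
  assumes two: "(2::'a) \<noteq> 0" and c: "\<And>i. i < 2 * k \<Longrightarrow> c i \<noteq> 0" and M: "M \<in> fvecs (2 * k)"
  defines "q \<equiv> of_nat CARD('a) :: complex"
  shows "ffourier (2 * k) (ind {X \<in> fvecs (2 * k). (\<Sum>i<2 * k. c i * X i ^ 2) = 0}) M
    = ind {\<lambda>_. 0} M / q + of_int (qchar ((-1) ^ k * (\<Prod>i<2 * k. c i)))
        * (of_bool ((\<Sum>i<2 * k. M i ^ 2 / c i) = 0) / q ^ k - 1 / q ^ (k + 1))"
proof -
  have q: "q \<noteq> 0"
    by (simp add: q_def)
  have alg: "(I * (Q * Q) + e * Q * (b * q - 1)) / (Q * Q * q) = I / q + e * (b / Q - 1 / (Q * q))"
    if "Q \<noteq> 0" for I e b Q :: complex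
    using that q by (simp add: field_simps)
  have powers: "q ^ (2 * k) = q ^ k * q ^ k" "q ^ (2 * k + 1) = q ^ k * q ^ k * q" "q ^ (k + 1) = q ^ k * q"
    by (simp_all add: power_add mult_2)
  have "q ^ k \<noteq> 0"
    using q by simp
  have "ffourier (2 * k) (ind {X \<in> fvecs (2 * k). (\<Sum>i<2 * k. c i * X i ^ 2) = 0}) M
      = (\<Sum>s\<in>UNIV. \<Prod>i<2 * k. \<Sum>x\<in>UNIV. can_chi (s * c i * x ^ 2 - M i * x)) / q ^ (2 * k + 1)"
    unfolding q_def by (rule ffourier_diagonal_quadric_char_sum)
  also have "\<dots> = (ind {\<lambda>_. 0} M * q ^ (2 * k) + of_int (qchar ((-1) ^ k * (\<Prod>i<2 * k. c i))) * q ^ k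
        * (of_bool ((\<Sum>i<2 * k. M i ^ 2 / c i) = 0) * q - 1)) / q ^ (2 * k + 1)"
    unfolding q_def by (simp only: sum_prod_sum_can_chi_quadratic[OF two c M])
  also have "\<dots> = ind {\<lambda>_. 0} M / q + of_int (qchar ((-1) ^ k * (\<Prod>i<2 * k. c i)))
        * (of_bool ((\<Sum>i<2 * k. M i ^ 2 / c i) = 0) / q ^ k - 1 / q ^ (k + 1))"
    unfolding powers using \<open>q ^ k \<noteq> 0\<close> by (rule alg)
  finally show ?thesis .
qed

section \<open>The varieties \<open>V\<^sub>Q\<^sub>r\<close> and \<open>V\<^sub>Q\<^sub>r\<^sup>*\<close>\<close>

definition qform_coeff :: "nat \<Rightarrow> 'a::field \<Rightarrow> nat \<Rightarrow> 'a" where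
  "qform_coeff d e i = (if i < d - 1 then (-1) ^ i else if even d then - e else e)"

definition VQ_coeff :: "nat \<Rightarrow> 'a::field \<Rightarrow> 'a \<Rightarrow> nat \<Rightarrow> 'a" where
  "VQ_coeff d e r i = (if i < d then qform_coeff d e i else - r * qform_coeff d e (i - d))"

lemma qform_coeff_nonzero: "e \<noteq> 0 \<Longrightarrow> qform_coeff d e i \<noteq> 0"
  by (simp add: qform_coeff_def)

lemma qform_coeff_inverse: "qform_coeff d (inverse e) i = inverse (qform_coeff d e i)"
  by (simp add: qform_coeff_def power_inverse[symmetric])

lemma qform_eq_sum:
  assumes "0 < d"
  shows "qform d e x = (\<Sum>i<d. qform_coeff d e i * x i ^ 2)"
proof -
  obtain k where k: "d = Suc k"
    using assms by (cases d) auto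
  have "(\<Sum>i<d. qform_coeff d e i * x i ^ 2) = (\<Sum>i<k. qform_coeff d e i * x i ^ 2) + qform_coeff d e k * x k ^ 2"
    by (simp add: k)
  also have "(\<Sum>i<k. qform_coeff d e i * x i ^ 2) = (\<Sum>i<d - 1. (-1) ^ i * x i ^ 2)"
    by (simp add: k qform_coeff_def)
  finally show ?thesis
    by (simp add: qform_def qform_coeff_def k)
qed

lemma sum_lessThan_add: "(\<Sum>i<(m::nat) + n. f i) = (\<Sum>i<m. f i) + (\<Sum>i<n. f (m + i))"
  by (induction n) (simp_all add: add.assoc)

lemma prod_lessThan_add: "(\<Prod>i<(m::nat) + n. f i) = (\<Prod>i<m. f i) * (\<Prod>i<n. f (m + i))"
  by (induction n) (simp_all add: mult.assoc)

lemma VQ_eq_diagonal_quadric: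
  assumes "0 < d"
  shows "VQ d e r = {X \<in> fvecs (2 * d). (\<Sum>i<2 * d. VQ_coeff d e r i * X i ^ 2) = 0}"
proof -
  have "(\<Sum>i<2 * d. VQ_coeff d e r i * X i ^ 2)
      = (\<Sum>i<d. VQ_coeff d e r i * X i ^ 2) + (\<Sum>i<d. VQ_coeff d e r (d + i) * X (d + i) ^ 2)"
    for X :: "nat \<Rightarrow> 'a"
    unfolding mult_2 by (rule sum_lessThan_add)
  also have "\<dots> X = qform d e (fst_half d X) - r * qform d e (snd_half d X)" for X
    using assms by (simp add: VQ_coeff_def qform_eq_sum fst_half_def snd_half_def sum_distrib_left
        sum_negf mult.assoc)
  finally show ?thesis
    unfolding VQ_def by simp
qed

lemma VQdual_iff:
  assumes "0 < d" and "M \<in> fvecs (2 * d)"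
  shows "M \<in> VQdual d e r \<longleftrightarrow> (\<Sum>i<2 * d. M i ^ 2 / VQ_coeff d e r i) = 0"
proof -
  have "(\<Sum>i<2 * d. M i ^ 2 / VQ_coeff d e r i)
      = (\<Sum>i<d. M i ^ 2 / VQ_coeff d e r i) + (\<Sum>i<d. M (d + i) ^ 2 / VQ_coeff d e r (d + i))"
    unfolding mult_2 by (rule sum_lessThan_add)
  also have "\<dots> = qform d (inverse e) (fst_half d M) - inverse r * qform d (inverse e) (snd_half d M)"
    using assms(1)
    by (simp add: VQ_coeff_def qform_eq_sum fst_half_def snd_half_def qform_coeff_inverse
        sum_distrib_left sum_negf divide_inverse mult_ac)
  finally show ?thesis
    using assms(2) unfolding VQdual_def by simp
qed

lemma qchar_VQ_discriminant:
  fixes e r :: "'a::{finite,field}"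
  assumes two: "(2::'a) \<noteq> 0" and e: "e \<noteq> 0"
  shows "qchar ((-1) ^ d * (\<Prod>i<2 * d. VQ_coeff d e r i)) = qchar r ^ d"
proof -
  let ?a = "\<Prod>i<d. qform_coeff d e i"
  have "(\<Prod>i<2 * d. VQ_coeff d e r i) = ?a * (\<Prod>i<d. - r * qform_coeff d e i)"
    by (simp add: mult_2 prod_lessThan_add VQ_coeff_def)
  also have "(\<Prod>i<d. - r * qform_coeff d e i) = (- r) ^ d * ?a"
    by (simp only: prod.distrib prod_constant card_lessThan)
  finally have "(-1) ^ d * (\<Prod>i<2 * d. VQ_coeff d e r i) = ((-1) ^ d * (- r) ^ d) * ?a ^ 2"
    by (simp add: power2_eq_square mult_ac)
  also have "(-1) ^ d * (- r) ^ d = r ^ d"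
    by (simp flip: power_mult_distrib)
  finally have "(-1) ^ d * (\<Prod>i<2 * d. VQ_coeff d e r i) = ?a ^ 2 * r ^ d"
    by (simp only: mult.commute)
  moreover have "?a \<noteq> 0"
    using e by (simp add: qform_coeff_nonzero)
  ultimately show ?thesis
    by (simp add: qchar_square_mult qchar_power[OF two])
qed

theorem proposition5p2:
  fixes A :: "'a::{finite,field} mat" and d :: nat and r \<epsilon> :: 'a and M :: "nat \<Rightarrow> 'a"
  assumes q_odd: "odd CARD('a)"
    and d_ge: "d \<ge> 2"
    and r_nz: "r \<noteq> 0"
    and A_dim: "A \<in> carrier_mat d d"
    and A_sym: "transpose_mat A = A"
    and A_nonsing: "det A \<noteq> 0"
    and eps_nz: "\<epsilon> \<noteq> 0"
    and eps_even: "even d \<Longrightarrow> qchar ((-1) ^ (d div 2) * \<epsilon>) = qchar (det A)"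
    and eps_odd: "odd d \<Longrightarrow> qchar ((-1) ^ ((d - 1) div 2) * \<epsilon>) = qchar (det A)"
    and M_in: "M \<in> fvecs (2 * d)"
  shows "(even d \<longrightarrow>
            ffourier (2 * d) (ind (VQ d \<epsilon> r)) M =
              ind {\<lambda>_. 0} M / of_nat CARD('a)
              + ind (VQdual d \<epsilon> r) M / of_nat CARD('a) ^ d
              - 1 / of_nat CARD('a) ^ (d + 1))
       \<and> (odd d \<longrightarrow>
            ffourier (2 * d) (ind (VQ d \<epsilon> r)) M =
              ind {\<lambda>_. 0} M / of_nat CARD('a)
              + of_int (qchar r) * ind (VQdual d \<epsilon> r) M / of_nat CARD('a) ^ d
              - of_int (qchar r) / of_nat CARD('a) ^ (d + 1))"
proof -
  \<comment> \<open>The matrix \<open>A\<close> only constrains the choice of \<open>\<epsilon>\<close>; the identity holds for every \<open>\<epsilon> \<noteq> 0\<close>.\<close>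
  have two: "(2::'a) \<noteq> 0"
    by (rule two_neq_zero_if_odd_card[OF q_odd])
  have d: "0 < d"
    using d_ge by simp
  have "VQ_coeff d \<epsilon> r i \<noteq> 0" for i
    using eps_nz r_nz by (simp add: VQ_coeff_def qform_coeff_nonzero)
  then have "ffourier (2 * d) (ind (VQ d \<epsilon> r)) M = ind {\<lambda>_. 0} M / of_nat CARD('a)
      + of_int (qchar r ^ d) * (ind (VQdual d \<epsilon> r) M / of_nat CARD('a) ^ d - 1 / of_nat CARD('a) ^ (d + 1))"
    using ffourier_diagonal_quadric[OF two _ M_in, of "VQ_coeff d \<epsilon> r"]
    by (simp add: VQ_eq_diagonal_quadric[OF d] VQdual_iff[OF d M_in] qchar_VQ_discriminant[OF two eps_nz]
        ind_def)
  with qchar_power_parity[OF r_nz, of d] show ?thesis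
    by (cases "even d") (simp_all add: add_diff_eq right_diff_distrib)
qed

end
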